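(* Let $\mathcal{L}(\mathbf{x},y;\mathbf{w})=g(-y\langle\mathbf{w},\mathbf{x}\rangle)$ where $g:\mathbb{R}\to\mathbb{R}$ is non-decreasing, convex and almost-everywhere differentiable (with the integrals defining the IG below assumed well defined). Fix $y\in\{-1,+1\}$, $\mathbf{w}\in\mathbb{R}^d$, $\mathbf{x}\in\mathbb{R}^d$, $\varepsilon>0$, and let $\mathcal{L}_y:\mathbb{R}^d\to\mathbb{R}$ be $\mathcal{L}_y(\mathbf{z})=\mathcal{L}(\mathbf{z},y;\mathbf{w})$. Then $$\mathcal{L}(\mathbf{x},y;\mathbf{w})+\max_{\|\mathbf{x}'-\mathbf{x}\|_\infty\le\varepsilon}\big\|\mathrm{IG}^{\mathcal{L}_y}(\mathbf{x},\mathbf{x}')\big\|_1=\max_{\|\delta\|_\infty\le\varepsilon}\mathcal{L}(\mathbf{x}+\delta,y;\mathbf{w}).$$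
   Context: For $F:\mathbb{R}^d\to\mathbb{R}$, input $\mathbf{x}$ and baseline $\mathbf{u}$, the Integrated Gradients attribution is the vector $\mathrm{IG}^F(\mathbf{x},\mathbf{u})$ with components $\mathrm{IG}_i^F(\mathbf{x},\mathbf{u}):=(x_i-u_i)\int_0^1\partial_iF(\mathbf{u}+\alpha(\mathbf{x}-\mathbf{u}))\,d\alpha$, where $\partial_iF$ is the partial derivative of $F$ in the $i$-th coordinate. In the claim, $\mathbf{x}'$ plays the role of the baseline. *)

theory Defs
  imports "HOL-Analysis.Analysis"
begin

definition loss :: "(real \<Rightarrow> real) \<Rightarrow> real^'n \<Rightarrow> real \<Rightarrow> real^'n \<Rightarrow> real" where
  "loss g x y w = g (- (y * (w \<bullet> x)))"

definition has_partial :: "(real^'n \<Rightarrow> real) \<Rightarrow> 'n \<Rightarrow> real^'n \<Rightarrow> bool" where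
  "has_partial F i z \<longleftrightarrow> (\<exists>D. ((\<lambda>t. F (z + t *\<^sub>R axis i 1)) has_real_derivative D) (at 0))"

definition partial :: "(real^'n \<Rightarrow> real) \<Rightarrow> 'n \<Rightarrow> real^'n \<Rightarrow> real" where
  "partial F i z = deriv (\<lambda>t. F (z + t *\<^sub>R axis i 1)) 0"

definition IG :: "(real^'n \<Rightarrow> real) \<Rightarrow> real^'n \<Rightarrow> real^'n \<Rightarrow> 'n \<Rightarrow> real" where
  "IG F x u i = (x $ i - u $ i) *
     integral {0..1} (\<lambda>\<alpha>. partial F i (u + \<alpha> *\<^sub>R (x - u)))"

definition IG_well_defined :: "(real^'n \<Rightarrow> real) \<Rightarrow> real^'n \<Rightarrow> real^'n \<Rightarrow> bool" where
  "IG_well_defined F x u \<longleftrightarrow> (\<forall>i.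
     negligible {\<alpha>\<in>{0..1}. \<not> has_partial F i (u + \<alpha> *\<^sub>R (x - u))} \<and>
     (\<lambda>\<alpha>. partial F i (u + \<alpha> *\<^sub>R (x - u))) integrable_on {0..1})"

definition IG_l1 :: "(real^'n \<Rightarrow> real) \<Rightarrow> real^'n \<Rightarrow> real^'n \<Rightarrow> real" where
  "IG_l1 F x u = (\<Sum>i\<in>UNIV. \<bar>IG F x u i\<bar>)"

definition linf_cball :: "real^'n \<Rightarrow> real \<Rightarrow> (real^'n) set" where
  "linf_cball x e = {z. \<forall>i. \<bar>z $ i - x $ i\<bar> \<le> e}"

definition is_max :: "real set \<Rightarrow> real \<Rightarrow> bool" where
  "is_max S m \<longleftrightarrow> m \<in> S \<and> (\<forall>s\<in>S. s \<le> m)"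

end

theory Submission
  imports Defs
begin

text \<open>The loss is the ridge function z \<mapsto> g (v \<bullet> z) with v = -y w. For a ridge function the l1
  norm of IG along the segment from u to x is (\<Sum>i. \<bar>x$i - u$i\<bar> \<bar>v$i\<bar>) times the mean of g' between
  v \<bullet> u and v \<bullet> x, and for convex g this mean is the slope of the chord of g over that interval.
  Since \<bar>v \<bullet> x - v \<bullet> u\<bar> \<le> \<Sum>i. \<bar>x$i - u$i\<bar> \<bar>v$i\<bar> \<le> A := \<epsilon> \<Sum>i. \<bar>v$i\<bar> on the box, convexity and monotonicity
  bound the attribution by A times the slope of the chord from v \<bullet> x to v \<bullet> x + A, that is by
  g (v \<bullet> x + A) - g (v \<bullet> x). The corner x + \<epsilon> sgn v attains this bound as a baseline and, as a
  perturbation, maximises the loss with value g (v \<bullet> x + A).\<close>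

lemma integral_le_off_negligible:
  fixes f g :: "'a::euclidean_space \<Rightarrow> real"
  assumes "f integrable_on S" "g integrable_on S" "negligible N"
    and "\<And>x. x \<in> S - N \<Longrightarrow> f x \<le> g x"
  shows "integral S f \<le> integral S g"
proof -
  define f' where "f' x = (if x \<in> N then g x else f x)" for x
  have "integral S f = integral S f'"
    by (rule integral_spike[OF \<open>negligible N\<close>]) (simp add: f'_def)
  also have "\<dots> \<le> integral S g"
  proof (rule integral_le)
    show "f' integrable_on S"
      by (rule integrable_spike[OF \<open>f integrable_on S\<close> \<open>negligible N\<close>]) (simp add: f'_def)
  qed (use assms in \<open>auto simp: f'_def\<close>)
  finally show ?thesis .
qed

lemma integral_difference_quotient_tendsto:
  fixes f :: "real \<Rightarrow> real"
  assumes contf: "continuous_on UNIV f" and "a \<le> b"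
  shows "((\<lambda>h. integral {a..b} (\<lambda>t. (f (t + h) - f t) / h)) \<longlongrightarrow> f b - f a) (at 0)"
proof -
  have intf: "f integrable_on {c..d}" for c d
    by (rule integrable_continuous_interval, rule continuous_on_subset[OF contf]) auto
  define P where "P t = integral {a - 1..t} f" for t
  have P_deriv: "(P has_real_derivative f t) (at t)" if "a - 1 < t" for t
  proof -
    have "(P has_real_derivative f t) (at t within {a - 1..t + 1})"
      unfolding P_def using that
      by (intro integral_has_real_derivative continuous_on_subset[OF contf]) auto
    moreover have "t \<in> interior {a - 1..t + 1}" using that by auto
    ultimately show ?thesis using at_within_interior[of t "{a - 1..t + 1}"] by simp
  qed
  have P_quotient: "((\<lambda>h. (P (c + h) - P c) / h) \<longlongrightarrow> f c) (at 0)" if "a - 1 < c" for c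
  proof -
    have "((\<lambda>h. P (h + c)) has_real_derivative f c) (at 0)"
      using P_deriv[OF that] DERIV_shift[of P "f c" 0 c] by simp
    thus ?thesis unfolding has_field_derivative_iff by (simp add: add.commute)
  qed
  have P_diff: "integral {c..d} f = P d - P c" if "a - 1 \<le> c" "c \<le> d" for c d
    unfolding P_def using Henstock_Kurzweil_Integration.integral_combine[OF that intf] by simp
  have "integral {a..b} (\<lambda>t. (f (t + h) - f t) / h) = (P (b + h) - P b) / h - (P (a + h) - P a) / h"
    if "\<bar>h\<bar> < 1" for h
  proof -
    have shifted: "integral {a..b} (\<lambda>t. f (t + h)) = integral {a + h..b + h} f"
      using integral_shift_Icc_real[of a b f h] by (simp add: o_def add.commute)
    have "(\<lambda>t. f (t + h)) integrable_on {a..b}"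
      by (rule integrable_continuous_interval, rule continuous_on_compose2[OF contf])
        (auto intro!: continuous_intros)
    then have "integral {a..b} (\<lambda>t. (f (t + h) - f t) / h)
        = (integral {a + h..b + h} f - integral {a..b} f) / h"
      using integral_diff[OF _ intf] shifted by simp
    also have "\<dots> = (P (b + h) - P b) / h - (P (a + h) - P a) / h"
      using that \<open>a \<le> b\<close> by (simp add: P_diff abs_less_iff diff_divide_distrib)
    finally show ?thesis .
  qed
  then have "\<forall>\<^sub>F h in at 0. (P (b + h) - P b) / h - (P (a + h) - P a) / h
      = integral {a..b} (\<lambda>t. (f (t + h) - f t) / h)"
    unfolding eventually_at by (auto intro!: exI[of _ 1] simp: dist_real_def)
  moreover have "((\<lambda>h. (P (b + h) - P b) / h - (P (a + h) - P a) / h) \<longlongrightarrow> f b - f a) (at 0)"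
    using \<open>a \<le> b\<close> by (intro tendsto_diff P_quotient) auto
  ultimately show ?thesis by (rule Lim_transform_eventually[rotated])
qed

text \<open>By the tangent inequality the difference quotients of f bound f' from above for h > 0
  and from below for h < 0, so no absolute continuity argument is needed.\<close>

lemma convex_on_integral_derivative:
  fixes f f' :: "real \<Rightarrow> real"
  assumes conv: "convex_on UNIV f" and "a \<le> b" and N: "negligible N"
    and deriv: "\<And>t. t \<in> {a..b} - N \<Longrightarrow> (f has_real_derivative f' t) (at t)"
    and int: "f' integrable_on {a..b}"
  shows "integral {a..b} f' = f b - f a"
proof -
  have contf: "continuous_on UNIV f" using convex_on_continuous[OF open_UNIV conv] .
  define Q where "Q h = integral {a..b} (\<lambda>t. (f (t + h) - f t) / h)" for h
  have Q_lim: "(Q \<longlongrightarrow> f b - f a) (at 0)"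
    unfolding Q_def by (rule integral_difference_quotient_tendsto[OF contf \<open>a \<le> b\<close>])
  have int_quotient: "(\<lambda>t. (f (t + h) - f t) / h) integrable_on {a..b}" if "h \<noteq> 0" for h
    by (rule integrable_continuous_interval, intro continuous_intros
        continuous_on_compose2[OF contf] continuous_on_subset[OF contf]) (use that in auto)
  have tangent: "f' t * h \<le> f (t + h) - f t" if "t \<in> {a..b} - N" for t h
    using convex_on_imp_above_tangent[OF conv connected_UNIV _ _, of t "t + h" "f' t"] deriv[OF that]
    by simp
  have "integral {a..b} f' \<le> f b - f a"
  proof (rule tendsto_lowerbound[OF tendsto_mono[OF at_le Q_lim]])
    have "\<forall>\<^sub>F h in at_right 0. h \<in> {0<..<1::real}"
      by (rule eventually_at_right_real) simp
    then show "\<forall>\<^sub>F h in at_right 0. integral {a..b} f' \<le> Q h"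
    proof eventually_elim
      case (elim h)
      show ?case unfolding Q_def
        by (rule integral_le_off_negligible[OF int int_quotient N])
          (use tangent elim in \<open>auto simp: pos_le_divide_eq\<close>)
    qed
  qed auto
  moreover have "f b - f a \<le> integral {a..b} f'"
  proof (rule tendsto_upperbound[OF tendsto_mono[OF at_le Q_lim]])
    have "\<forall>\<^sub>F h in at_left 0. h \<in> {-1<..<0::real}"
      by (rule eventually_at_left_real) simp
    then show "\<forall>\<^sub>F h in at_left 0. Q h \<le> integral {a..b} f'"
    proof eventually_elim
      case (elim h)
      show ?case unfolding Q_def
        by (rule integral_le_off_negligible[OF int_quotient int N])
          (use tangent elim in \<open>auto simp: neg_divide_le_eq\<close>)
    qed
  qed auto
  ultimately show ?thesis by simp
qed

lemma convex_on_slope_mono: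
  fixes f :: "real \<Rightarrow> real"
  assumes conv: "convex_on UNIV f" and "s < t" "s' < t'" "s \<le> s'" "t \<le> t'"
  shows "(f t - f s) / (t - s) \<le> (f t' - f s') / (t' - s')"
proof -
  have swap: "(f p - f q) / (p - q) = (f q - f p) / (q - p)" for p q
    by (metis minus_diff_eq minus_divide_divide)
  have "(f t - f s) / (t - s) \<le> (f t' - f s) / (t' - s)"
  proof (cases "t = t'")
    case False
    with assms have "t < t'" by simp
    from convex_on_slope_le(1)[OF conv UNIV_I UNIV_I \<open>s < t\<close> this]
    show ?thesis by (simp only: swap[of s t] swap[of s t'])
  qed simp
  also have "\<dots> \<le> (f t' - f s') / (t' - s')"
  proof (cases "s = s'")
    case False
    with assms have "s < s'" by simp
    from convex_on_slope_le(2)[OF conv UNIV_I UNIV_I this \<open>s' < t'\<close>]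
    show ?thesis by (simp only: swap[of s t'] swap[of s' t'])
  qed simp
  finally show ?thesis .
qed

text \<open>J is the slope of f between p and q; when p = q the chord equation says nothing and J is
  instead required to be the derivative.\<close>

lemma convex_mono_slope_le:
  fixes f :: "real \<Rightarrow> real"
  assumes mono: "mono f" and conv: "convex_on UNIV f"
    and dist: "\<bar>q - p\<bar> \<le> A"
    and chord: "(q - p) * J = f q - f p"
    and tangent: "p = q \<Longrightarrow> (f has_real_derivative J) (at q)"
  shows "0 \<le> J" and "A * J \<le> f (q + A) - f q"
proof -
  have below_chord: "A * J \<le> f (q + A) - f q" if "0 < A" "J \<le> (f (q + A) - f q) / (q + A - q)"
  proof -
    have "A * J \<le> A * ((f (q + A) - f q) / A)"
      using that by (intro mult_left_mono) auto
    with \<open>0 < A\<close> show ?thesis by simp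
  qed
  consider "p < q" | "q < p" | "p = q" by linarith
  then have "0 \<le> J \<and> A * J \<le> f (q + A) - f q"
  proof cases
    case 1
    then have J: "J = (f q - f p) / (q - p)" using chord by (simp add: field_simps)
    show ?thesis
    proof
      show "0 \<le> J" unfolding J using 1 monoD[OF mono, of p q] by simp
      have "(f q - f p) / (q - p) \<le> (f (q + A) - f q) / (q + A - q)"
        by (rule convex_on_slope_mono[OF conv]) (use 1 dist in auto)
      with 1 dist show "A * J \<le> f (q + A) - f q" by (intro below_chord) (auto simp: J)
    qed
  next
    case 2
    then have J: "J = (f p - f q) / (p - q)" using chord by (simp add: field_simps)
    show ?thesis
    proof
      show "0 \<le> J" unfolding J using 2 monoD[OF mono, of q p] by simp
      have "(f p - f q) / (p - q) \<le> (f (q + A) - f q) / (q + A - q)"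
        by (rule convex_on_slope_mono[OF conv]) (use 2 dist in auto)
      with 2 dist show "A * J \<le> f (q + A) - f q" by (intro below_chord) (auto simp: J)
    qed
  next
    case 3
    with tangent have J: "(f has_real_derivative J) (at q)" by simp
    have above: "J * (z - q) \<le> f z - f q" for z
      using convex_on_imp_above_tangent[OF conv connected_UNIV _ _ J] by simp
    from above[of "q - 1"] above[of "q + A"] monoD[OF mono, of "q - 1" q]
    show ?thesis by (simp add: mult.commute)
  qed
  then show "0 \<le> J" "A * J \<le> f (q + A) - f q" by auto
qed

lemma convex_on_affine_comp:
  fixes g :: "real \<Rightarrow> real"
  assumes conv: "convex_on UNIV g"
  shows "convex_on UNIV (\<lambda>a. g (p + a * c))"
proof (rule convex_onI)
  fix t a b :: real
  assume "0 < t" "t < 1"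
  then have "g ((1 - t) *\<^sub>R (p + a * c) + t *\<^sub>R (p + b * c))
      \<le> (1 - t) * g (p + a * c) + t * g (p + b * c)"
    using convex_onD[OF conv, of t] by simp
  moreover have "(1 - t) *\<^sub>R (p + a * c) + t *\<^sub>R (p + b * c) = p + ((1 - t) *\<^sub>R a + t *\<^sub>R b) * c"
    by (simp add: algebra_simps)
  ultimately show "g (p + ((1 - t) *\<^sub>R a + t *\<^sub>R b) * c) \<le> (1 - t) * g (p + a * c) + t * g (p + b * c)"
    by simp
qed simp

definition mean_deriv :: "(real \<Rightarrow> real) \<Rightarrow> real \<Rightarrow> real \<Rightarrow> real" where
  "mean_deriv g p q = integral {0..1} (\<lambda>a. deriv g (p + a * (q - p)))"

lemma mean_deriv_chord:
  assumes conv: "convex_on UNIV g"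
    and N: "negligible {a \<in> {0..1}. \<not> g differentiable at (p + a * (q - p))}"
    and int: "(\<lambda>a. deriv g (p + a * (q - p))) integrable_on {0..1}"
  shows "(q - p) * mean_deriv g p q = g q - g p"
proof -
  have "integral {0..1} (\<lambda>a. deriv g (p + a * (q - p)) * (q - p))
      = g (p + 1 * (q - p)) - g (p + 0 * (q - p))"
  proof (rule convex_on_integral_derivative[OF convex_on_affine_comp[OF conv] _ N])
    fix a assume "a \<in> {0..1} - {a \<in> {0..1}. \<not> g differentiable at (p + a * (q - p))}"
    then have "(g has_real_derivative deriv g (p + a * (q - p))) (at (p + a * (q - p)))"
      by (simp add: DERIV_deriv_iff_real_differentiable)
    then show "((\<lambda>a. g (p + a * (q - p))) has_real_derivative deriv g (p + a * (q - p)) * (q - p)) (at a)"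
      by (rule DERIV_chain2) (auto intro!: derivative_eq_intros)
  qed (use integrable_on_cmult_right[OF int] in auto)
  then show ?thesis by (simp add: mean_deriv_def mult.commute)
qed

lemma mean_deriv_degenerate:
  assumes "negligible {a \<in> {0..1}. \<not> g differentiable at (p + a * (q - p))}" and "p = q"
  shows "(g has_real_derivative mean_deriv g p q) (at q)"
proof -
  have "g differentiable at q"
  proof (rule ccontr)
    assume "\<not> g differentiable at q"
    with \<open>p = q\<close> have "{a \<in> {0..1}. \<not> g differentiable at (p + a * (q - p))} = {0..1}" by auto
    with assms(1) have "negligible {0..1::real}" by simp
    then show False using negligible_interval(1)[of "0::real" 1] by simp
  qed
  with \<open>p = q\<close> show ?thesis
    by (simp add: mean_deriv_def DERIV_deriv_iff_real_differentiable)
qed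

lemma ridge_along_axis:
  "(\<lambda>t. g (v \<bullet> (z + t *\<^sub>R axis i 1))) = (\<lambda>t. g (v \<bullet> z + t * v $ i))"
  by (simp add: inner_add_right inner_axis mult.commute)

lemma partial_ridge:
  assumes "v $ i = 0 \<or> g differentiable at (v \<bullet> z)"
  shows "partial (\<lambda>z. g (v \<bullet> z)) i z = v $ i * deriv g (v \<bullet> z)"
proof (cases "v $ i = 0")
  case True
  then show ?thesis by (simp add: partial_def ridge_along_axis)
next
  case False
  with assms have "(g has_real_derivative deriv g (v \<bullet> z)) (at (v \<bullet> z + 0 * v $ i))"
    by (simp add: DERIV_deriv_iff_real_differentiable)
  then have "((\<lambda>t. g (v \<bullet> z + t * v $ i)) has_real_derivative deriv g (v \<bullet> z) * v $ i) (at 0)"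
    by (rule DERIV_chain2) (auto intro!: derivative_eq_intros)
  then show ?thesis by (simp add: partial_def ridge_along_axis DERIV_imp_deriv mult.commute)
qed

lemma has_partial_ridge_imp_differentiable:
  assumes "v $ i \<noteq> 0" and "has_partial (\<lambda>z. g (v \<bullet> z)) i z"
  shows "g differentiable at (v \<bullet> z)"
proof -
  obtain D where D: "((\<lambda>t. g (v \<bullet> z + t * v $ i)) has_real_derivative D) (at 0)"
    using assms(2) by (auto simp: has_partial_def ridge_along_axis)
  have "((\<lambda>r. (r - v \<bullet> z) / v $ i) has_real_derivative 1 / v $ i) (at (v \<bullet> z))"
    using assms(1) by (auto intro!: derivative_eq_intros)
  then have "((\<lambda>r. g (v \<bullet> z + (r - v \<bullet> z) / v $ i * v $ i)) has_real_derivative D * (1 / v $ i))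
      (at (v \<bullet> z))"
    by (rule DERIV_chain2[rotated]) (simp add: D)
  with assms(1) show ?thesis by (auto simp: real_differentiable_def)
qed

lemma inner_segment:
  fixes v :: "'a::real_inner"
  shows "v \<bullet> (u + a *\<^sub>R (x - u)) = v \<bullet> u + a * (v \<bullet> x - v \<bullet> u)"
  by (simp add: inner_simps algebra_simps)

lemma IG_well_defined_ridgeD:
  assumes wd: "IG_well_defined (\<lambda>z. g (v \<bullet> z)) x u" and vi: "v $ i \<noteq> 0"
  shows "negligible {a \<in> {0..1}. \<not> g differentiable at (v \<bullet> u + a * (v \<bullet> x - v \<bullet> u))}"
    and "(\<lambda>a. deriv g (v \<bullet> u + a * (v \<bullet> x - v \<bullet> u))) integrable_on {0..1}"
proof -
  define S where "S = {a \<in> {0..1}. \<not> has_partial (\<lambda>z. g (v \<bullet> z)) i (u + a *\<^sub>R (x - u))}"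
  have S: "negligible S" and int: "(\<lambda>a. partial (\<lambda>z. g (v \<bullet> z)) i (u + a *\<^sub>R (x - u))) integrable_on {0..1}"
    using wd by (auto simp: IG_well_defined_def S_def)
  have diff: "g differentiable at (v \<bullet> u + a * (v \<bullet> x - v \<bullet> u))" if "a \<in> {0..1} - S" for a
    using that has_partial_ridge_imp_differentiable[OF vi, of g "u + a *\<^sub>R (x - u)"]
    by (auto simp: S_def inner_segment)
  show "negligible {a \<in> {0..1}. \<not> g differentiable at (v \<bullet> u + a * (v \<bullet> x - v \<bullet> u))}"
    by (rule negligible_subset[OF S]) (use diff in blast)
  have "(\<lambda>a. v $ i * deriv g (v \<bullet> u + a * (v \<bullet> x - v \<bullet> u))) integrable_on {0..1}"
    by (rule integrable_spike[OF int S]) (use diff in \<open>simp add: partial_ridge inner_segment\<close>)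
  with vi show "(\<lambda>a. deriv g (v \<bullet> u + a * (v \<bullet> x - v \<bullet> u))) integrable_on {0..1}" by simp
qed

lemma IG_ridge:
  assumes "IG_well_defined (\<lambda>z. g (v \<bullet> z)) x u"
  shows "IG (\<lambda>z. g (v \<bullet> z)) x u i = (x $ i - u $ i) * v $ i * mean_deriv g (v \<bullet> u) (v \<bullet> x)"
proof (cases "v $ i = 0")
  case True
  then show ?thesis by (simp add: IG_def partial_ridge)
next
  case False
  have "integral {0..1} (\<lambda>a. partial (\<lambda>z. g (v \<bullet> z)) i (u + a *\<^sub>R (x - u)))
      = integral {0..1} (\<lambda>a. v $ i * deriv g (v \<bullet> u + a * (v \<bullet> x - v \<bullet> u)))"
  proof (rule integral_spike[OF IG_well_defined_ridgeD(1)[OF assms False]])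
    fix a assume "a \<in> {0..1} - {a \<in> {0..1}. \<not> g differentiable at (v \<bullet> u + a * (v \<bullet> x - v \<bullet> u))}"
    then show "v $ i * deriv g (v \<bullet> u + a * (v \<bullet> x - v \<bullet> u))
        = partial (\<lambda>z. g (v \<bullet> z)) i (u + a *\<^sub>R (x - u))"
      by (simp add: partial_ridge inner_segment)
  qed
  then show ?thesis by (simp add: IG_def mean_deriv_def)
qed

lemma IG_l1_ridge:
  assumes "IG_well_defined (\<lambda>z. g (v \<bullet> z)) x u"
  shows "IG_l1 (\<lambda>z. g (v \<bullet> z)) x u
    = (\<Sum>i\<in>UNIV. \<bar>x $ i - u $ i\<bar> * \<bar>v $ i\<bar>) * \<bar>mean_deriv g (v \<bullet> u) (v \<bullet> x)\<bar>"
  by (simp add: IG_l1_def IG_ridge[OF assms] abs_mult sum_distrib_right)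

lemma abs_inner_diff_le:
  fixes v x z :: "real ^ 'n"
  shows "\<bar>v \<bullet> x - v \<bullet> z\<bar> \<le> (\<Sum>i\<in>UNIV. \<bar>x $ i - z $ i\<bar> * \<bar>v $ i\<bar>)"
proof -
  have "\<bar>v \<bullet> x - v \<bullet> z\<bar> = \<bar>\<Sum>i\<in>UNIV. v $ i * (x $ i - z $ i)\<bar>"
    by (simp add: inner_vec_def right_diff_distrib sum_subtractf)
  also have "\<dots> \<le> (\<Sum>i\<in>UNIV. \<bar>x $ i - z $ i\<bar> * \<bar>v $ i\<bar>)"
    using sum_abs[of "\<lambda>i. v $ i * (x $ i - z $ i)" UNIV] by (simp add: abs_mult mult.commute)
  finally show ?thesis .
qed

lemma weighted_dist_le_linf_cball:
  assumes "z \<in> linf_cball x e"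
  shows "(\<Sum>i\<in>UNIV. \<bar>x $ i - z $ i\<bar> * \<bar>v $ i\<bar>) \<le> e * (\<Sum>i\<in>UNIV. \<bar>v $ i\<bar>)"
  unfolding sum_distrib_left
proof (rule sum_mono)
  fix i
  have "\<bar>x $ i - z $ i\<bar> \<le> e"
    using assms by (simp add: linf_cball_def abs_minus_commute)
  then show "\<bar>x $ i - z $ i\<bar> * \<bar>v $ i\<bar> \<le> e * \<bar>v $ i\<bar>" by (rule mult_right_mono) simp
qed

lemma sgn_vector_linf_cball:
  fixes v :: "real ^ 'n"
  assumes "0 \<le> e"
  defines "\<delta> \<equiv> \<chi> i. e * sgn (v $ i)"
  shows "\<delta> \<in> linf_cball 0 e"
    and "v \<bullet> \<delta> = e * (\<Sum>i\<in>UNIV. \<bar>v $ i\<bar>)"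
    and "(\<Sum>i\<in>UNIV. \<bar>\<delta> $ i\<bar> * \<bar>v $ i\<bar>) = e * (\<Sum>i\<in>UNIV. \<bar>v $ i\<bar>)"
  using assms by (auto simp: linf_cball_def inner_vec_def sum_distrib_left abs_mult
      sgn_real_def mult.left_commute intro!: sum.cong)

lemma IG_l1_ridge_le:
  fixes g :: "real \<Rightarrow> real"
  assumes mono: "mono g" and conv: "convex_on UNIV g"
    and u: "u \<in> linf_cball x e" and wd: "IG_well_defined (\<lambda>z. g (v \<bullet> z)) x u"
  shows "IG_l1 (\<lambda>z. g (v \<bullet> z)) x u \<le> g (v \<bullet> x + e * (\<Sum>i\<in>UNIV. \<bar>v $ i\<bar>)) - g (v \<bullet> x)"
proof -
  define A where "A = e * (\<Sum>i\<in>UNIV. \<bar>v $ i\<bar>)"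
  define B where "B = (\<Sum>i\<in>UNIV. \<bar>x $ i - u $ i\<bar> * \<bar>v $ i\<bar>)"
  define J where "J = mean_deriv g (v \<bullet> u) (v \<bullet> x)"
  have "B \<le> A" unfolding A_def B_def by (rule weighted_dist_le_linf_cball[OF u])
  show ?thesis
  proof (cases "v = 0")
    case True
    with IG_l1_ridge[OF wd] show ?thesis by simp
  next
    case False
    then obtain i where "v $ i \<noteq> 0" by (auto simp: vec_eq_iff)
    note wd_ridge = IG_well_defined_ridgeD[OF wd this]
    have "\<bar>v \<bullet> x - v \<bullet> u\<bar> \<le> A"
      using abs_inner_diff_le[of v x u] \<open>B \<le> A\<close> unfolding B_def by linarith
    moreover have "(v \<bullet> x - v \<bullet> u) * J = g (v \<bullet> x) - g (v \<bullet> u)"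
      unfolding J_def by (rule mean_deriv_chord[OF conv wd_ridge])
    moreover have "(g has_real_derivative J) (at (v \<bullet> x))" if "v \<bullet> u = v \<bullet> x"
      unfolding J_def by (rule mean_deriv_degenerate[OF wd_ridge(1) that])
    ultimately have "0 \<le> J" "A * J \<le> g (v \<bullet> x + A) - g (v \<bullet> x)"
      by (blast intro: convex_mono_slope_le[OF mono conv])+
    moreover have "0 \<le> B" unfolding B_def by (simp add: sum_nonneg)
    ultimately have "B * \<bar>J\<bar> \<le> g (v \<bullet> x + A) - g (v \<bullet> x)"
      using \<open>B \<le> A\<close> mult_right_mono[OF \<open>B \<le> A\<close> \<open>0 \<le> J\<close>] by simp
    then show ?thesis by (simp add: IG_l1_ridge[OF wd] A_def B_def J_def)
  qed
qed

lemma IG_l1_ridge_sgn_baseline: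
  fixes g :: "real \<Rightarrow> real" and v x :: "real ^ 'n"
  assumes mono: "mono g" and conv: "convex_on UNIV g" and "0 \<le> e"
  defines "\<delta> \<equiv> \<chi> i. e * sgn (v $ i)"
  assumes wd: "IG_well_defined (\<lambda>z. g (v \<bullet> z)) x (x + \<delta>)"
  shows "IG_l1 (\<lambda>z. g (v \<bullet> z)) x (x + \<delta>) = g (v \<bullet> x + e * (\<Sum>i\<in>UNIV. \<bar>v $ i\<bar>)) - g (v \<bullet> x)"
proof -
  define A where "A = e * (\<Sum>i\<in>UNIV. \<bar>v $ i\<bar>)"
  define J where "J = mean_deriv g (v \<bullet> (x + \<delta>)) (v \<bullet> x)"
  note \<delta> = sgn_vector_linf_cball[OF \<open>0 \<le> e\<close>, of v, folded \<delta>_def A_def]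
  have "0 \<le> A" unfolding A_def using \<open>0 \<le> e\<close> by (simp add: sum_nonneg)
  have IG: "IG_l1 (\<lambda>z. g (v \<bullet> z)) x (x + \<delta>) = A * \<bar>J\<bar>"
    using IG_l1_ridge[OF wd] \<delta>(3) by (simp add: J_def)
  show ?thesis
  proof (cases "v = 0")
    case True
    with IG show ?thesis by (simp add: A_def)
  next
    case False
    then obtain i where "v $ i \<noteq> 0" by (auto simp: vec_eq_iff)
    from mean_deriv_chord[OF conv IG_well_defined_ridgeD[OF wd this]]
    have "A * J = g (v \<bullet> x + A) - g (v \<bullet> x)"
      by (simp add: J_def inner_add_right \<delta>(2) algebra_simps)
    moreover have "g (v \<bullet> x) \<le> g (v \<bullet> x + A)" using monoD[OF mono] \<open>0 \<le> A\<close> by simp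
    moreover have "A * \<bar>J\<bar> = \<bar>A * J\<bar>" using \<open>0 \<le> A\<close> by (simp add: abs_mult)
    ultimately show ?thesis by (simp add: IG A_def[symmetric])
  qed
qed

lemma is_max_IG_l1_ridge:
  fixes g :: "real \<Rightarrow> real"
  assumes "mono g" and "convex_on UNIV g" and "0 \<le> e"
    and "\<forall>u \<in> linf_cball x e. IG_well_defined (\<lambda>z. g (v \<bullet> z)) x u"
  shows "is_max ((\<lambda>u. IG_l1 (\<lambda>z. g (v \<bullet> z)) x u) ` linf_cball x e)
    (g (v \<bullet> x + e * (\<Sum>i\<in>UNIV. \<bar>v $ i\<bar>)) - g (v \<bullet> x))"
proof -
  define \<delta> where "\<delta> = (\<chi> i. e * sgn (v $ i))"
  have "x + \<delta> \<in> linf_cball x e"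
    using sgn_vector_linf_cball(1)[OF \<open>0 \<le> e\<close>, of v] by (simp add: \<delta>_def linf_cball_def)
  moreover have "IG_l1 (\<lambda>z. g (v \<bullet> z)) x (x + \<delta>) = g (v \<bullet> x + e * (\<Sum>i\<in>UNIV. \<bar>v $ i\<bar>)) - g (v \<bullet> x)"
    using IG_l1_ridge_sgn_baseline[OF assms(1-3)] assms(4) calculation unfolding \<delta>_def by blast
  moreover have "IG_l1 (\<lambda>z. g (v \<bullet> z)) x u \<le> g (v \<bullet> x + e * (\<Sum>i\<in>UNIV. \<bar>v $ i\<bar>)) - g (v \<bullet> x)"
    if "u \<in> linf_cball x e" for u
    using IG_l1_ridge_le[OF assms(1,2) that] assms(4) that by blast
  ultimately show ?thesis unfolding is_max_def by (auto intro!: image_eqI[of _ _ "x + \<delta>"])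
qed

lemma is_max_ridge_linf_cball:
  fixes g :: "real \<Rightarrow> real"
  assumes mono: "mono g" and "0 \<le> e"
  shows "is_max ((\<lambda>\<delta>. g (v \<bullet> (x + \<delta>))) ` linf_cball 0 e) (g (v \<bullet> x + e * (\<Sum>i\<in>UNIV. \<bar>v $ i\<bar>)))"
proof -
  have "g (v \<bullet> (x + \<delta>)) \<le> g (v \<bullet> x + e * (\<Sum>i\<in>UNIV. \<bar>v $ i\<bar>))" if "\<delta> \<in> linf_cball 0 e" for \<delta>
  proof (rule monoD[OF mono])
    have "x + \<delta> \<in> linf_cball x e" using that by (simp add: linf_cball_def)
    then show "v \<bullet> (x + \<delta>) \<le> v \<bullet> x + e * (\<Sum>i\<in>UNIV. \<bar>v $ i\<bar>)"
      using abs_inner_diff_le[of v x "x + \<delta>"] weighted_dist_le_linf_cball[of "x + \<delta>" x e v]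
      by linarith
  qed
  moreover note sgn_vector_linf_cball[OF \<open>0 \<le> e\<close>, of v]
  ultimately show ?thesis
    unfolding is_max_def by (auto simp: inner_add_right intro!: image_eqI[of _ _ "\<chi> i. e * sgn (v $ i)"])
qed

theorem theorem2:
  fixes g :: "real \<Rightarrow> real" and x w :: "real^'n" and y \<epsilon> :: real
  assumes "mono g"
    and "convex_on UNIV g"
    and "negligible {t. \<not> g differentiable (at t)}"
    and "y \<in> {-1, 1}"
    and "\<epsilon> > 0"
    and "\<forall>x' \<in> linf_cball x \<epsilon>. IG_well_defined (\<lambda>z. loss g z y w) x x'"
  shows "\<exists>m1 m2.
           is_max ((\<lambda>x'. IG_l1 (\<lambda>z. loss g z y w) x x') ` linf_cball x \<epsilon>) m1 \<and>
           is_max ((\<lambda>\<delta>. loss g (x + \<delta>) y w) ` linf_cball 0 \<epsilon>) m2 \<and>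
           loss g x y w + m1 = m2"
proof -
  define v where "v = - y *\<^sub>R w"
  have ridge: "loss g z y w = g (v \<bullet> z)" for z
    by (simp add: loss_def v_def)
  define q where "q = g (v \<bullet> x + \<epsilon> * (\<Sum>i\<in>UNIV. \<bar>v $ i\<bar>))"
  have "\<forall>u \<in> linf_cball x \<epsilon>. IG_well_defined (\<lambda>z. g (v \<bullet> z)) x u"
    using assms(6) unfolding ridge .
  then have "is_max ((\<lambda>x'. IG_l1 (\<lambda>z. loss g z y w) x x') ` linf_cball x \<epsilon>) (q - g (v \<bullet> x))"
    unfolding ridge q_def by (rule is_max_IG_l1_ridge[OF assms(1,2) less_imp_le[OF assms(5)]])
  moreover have "is_max ((\<lambda>\<delta>. loss g (x + \<delta>) y w) ` linf_cball 0 \<epsilon>) q"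
    unfolding ridge q_def by (rule is_max_ridge_linf_cball[OF assms(1) less_imp_le[OF assms(5)]])
  moreover have "loss g x y w + (q - g (v \<bullet> x)) = q"
    by (simp add: ridge)
  ultimately show ?thesis by blast
qed

end
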